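(* Let $\mathcal{G}$ be a Grothendieck category, $X\in\mathcal{G}$, $\sigma$ an ordinal, $(X_\alpha\mid\alpha\le\sigma)$ a chain of subobjects of $X$ with $X_0=0$, $X_\sigma=X$, $X_\mu=\bigcup_{\alpha<\mu}X_\alpha$ for limit $\mu\le\sigma$, and let $(A_\alpha\mid\alpha<\sigma)$ be subobjects of $X$ with $X_{\alpha+1}=X_\alpha+A_\alpha$ for all $\alpha<\sigma$. Let $\mathcal{L}$ be the set of closed subsets of $\sigma$. If $(S_i\mid i\in I)$ is any family of elements of $\mathcal{L}$, then $\bigcup_{i\in I}S_i\in\mathcal{L}$ and $\bigcap_{i\in I}S_i\in\mathcal{L}$. Moreover, the restriction $\ell:\mathcal{L}\to\mathrm{Subobj}(X)$ is a complete lattice homomorphism, i.e. $\ell(\bigcup_i S_i)=\sum_i\ell(S_i)$ and $\ell(\bigcap_iS_i)=\bigcap_i\ell(S_i)$.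
   Context: For $S\subseteq\sigma$ (with $\sigma$ identified with the set of ordinals $<\sigma$), $\ell(S)=\sum_{\alpha\in S}A_\alpha\in\mathrm{Subobj}(X)$. A subset $S\subseteq\sigma$ is called closed if every $\alpha\in S$ satisfies $X_\alpha\cap A_\alpha\subseteq\sum_{\gamma\in S,\,\gamma<\alpha}A_\gamma$. Sums, intersections and direct unions are taken in the lattice $\mathrm{Subobj}(X)$ of subobjects of $X$. *)

theory Defs
  imports Main
begin

text \<open>The lattice Subobj(X) of subobjects of an object X of a Grothendieck category
is modelled abstractly by a complete lattice which is modular and upper continuous
(AB5: meets distribute over directed joins). Ordinals \<open>\<le> \<sigma>\<close> are modelled as the
initial segment below \<open>\<sigma>\<close> of a well-ordered type.\<close>

definition modular_lattice :: "'a::complete_lattice itself \<Rightarrow> bool" where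
  "modular_lattice _ \<longleftrightarrow> (\<forall>x y z::'a. x \<le> z \<longrightarrow> sup x (inf y z) = inf (sup x y) z)"

definition directed_set :: "'a::complete_lattice set \<Rightarrow> bool" where
  "directed_set D \<longleftrightarrow> D \<noteq> {} \<and> (\<forall>x\<in>D. \<forall>y\<in>D. \<exists>z\<in>D. x \<le> z \<and> y \<le> z)"

definition upper_continuous :: "'a::complete_lattice itself \<Rightarrow> bool" where
  "upper_continuous _ \<longleftrightarrow>
     (\<forall>(x::'a) D. directed_set D \<longrightarrow> inf x (Sup D) = Sup ((\<lambda>d. inf x d) ` D))"

definition osucc :: "'o::wellorder \<Rightarrow> 'o" where
  "osucc \<alpha> = (LEAST \<beta>. \<alpha> < \<beta>)"

text \<open>\<open>\<mu>\<close> is a limit ordinal (or zero): no largest element below it.\<close>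
definition olimit :: "'o::wellorder \<Rightarrow> bool" where
  "olimit \<mu> \<longleftrightarrow> (\<forall>\<alpha><\<mu>. \<exists>\<beta>. \<alpha> < \<beta> \<and> \<beta> < \<mu>)"

definition ell :: "('o \<Rightarrow> 'a::complete_lattice) \<Rightarrow> 'o set \<Rightarrow> 'a" where
  "ell A S = Sup (A ` S)"

definition closed_set :: "'o::wellorder \<Rightarrow> ('o \<Rightarrow> 'a::complete_lattice) \<Rightarrow> ('o \<Rightarrow> 'a) \<Rightarrow> 'o set \<Rightarrow> bool" where
  "closed_set \<sigma> X A S \<longleftrightarrow> S \<subseteq> {\<alpha>. \<alpha> < \<sigma>} \<and>
     (\<forall>\<alpha>\<in>S. inf (X \<alpha>) (A \<alpha>) \<le> ell A {\<gamma>\<in>S. \<gamma> < \<alpha>})"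

end

theory Submission
  imports Defs
begin

(* Write \<ell>(S,\<beta>) = \<Sum>{A \<gamma> | \<gamma> \<in> S, \<gamma> < \<beta>} for the part of \<ell>(S) below \<beta>.
   Unions are harmless: closedness is inherited by a union and \<ell> turns unions into
   joins by associativity of Sup.  Intersections carry the content.  For a closed S
   one shows, by transfinite induction on \<beta>, that X \<alpha> \<sqinter> \<ell>(S,\<beta>) \<le> \<ell>(S,\<alpha>) whenever
   \<alpha> \<le> \<beta> \<le> \<sigma> (successor step: modularity plus closedness at \<gamma>; limit step: upper
   continuity).  A second induction on \<beta> then gives, for a nonempty family of closed
   sets, \<Sqinter>\<^sub>i \<ell>(S\<^sub>i,\<beta>) \<le> \<ell>(\<Inter>\<^sub>i S\<^sub>i,\<beta>): at a successor \<gamma>+1 either \<gamma> lies in every S\<^sub>i and the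
   modular law splits off A \<gamma>, or the infimum already lies below X \<gamma>.  Taking \<beta> = \<alpha> yields
   closedness of the intersection, taking \<beta> = \<sigma> the meet formula.  The empty family is
   covered by X \<beta> = \<ell>({\<delta>. \<delta> < \<beta>}), which makes the whole of \<sigma> closed with \<ell>(\<sigma>) = X \<sigma> = top. *)

lemma modular_lawD:
  assumes "modular_lattice TYPE('a::complete_lattice)" and "(x::'a) \<le> z"
  shows "sup x (inf y z) = inf (sup x y) z"
  using assms unfolding modular_lattice_def by blast

lemma modular_split:
  assumes "modular_lattice TYPE('a::complete_lattice)" and "(a::'a) \<le> y" and "y \<le> sup x a"
  shows "y = sup a (inf x y)"
proof -
  have "sup a (inf x y) = inf (sup a x) y" using modular_lawD[OF assms(1,2)] .
  also have "\<dots> = y" using assms(3) by (simp add: sup_commute inf.absorb2)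
  finally show ?thesis by simp
qed

lemma inf_SUP_chain:
  fixes f :: "'b::linorder \<Rightarrow> 'a::complete_lattice"
  assumes "upper_continuous TYPE('a)" and mono: "mono_on C f"
  shows "inf x (SUP c\<in>C. f c) = (SUP c\<in>C. inf x (f c))"
proof (cases "C = {}")
  case True
  then show ?thesis by simp
next
  case False
  have "directed_set (f ` C)" unfolding directed_set_def
  proof (intro conjI ballI)
    show "f ` C \<noteq> {}" using False by simp
  next
    fix u v assume "u \<in> f ` C" "v \<in> f ` C"
    then obtain c d where cd: "c \<in> C" "d \<in> C" "u = f c" "v = f d" by auto
    show "\<exists>w\<in>f ` C. u \<le> w \<and> v \<le> w"
    proof (cases "c \<le> d")
      case True
      then show ?thesis using cd mono_onD[OF mono] by auto
    next
      case False
      then show ?thesis using cd mono_onD[OF mono, of d c] by auto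
    qed
  qed
  then show ?thesis using assms(1) unfolding upper_continuous_def by (simp add: image_comp)
qed

lemma osucc_greater: "(\<gamma>::'o::wellorder) < \<beta> \<Longrightarrow> \<gamma> < osucc \<gamma>"
  unfolding osucc_def by (rule LeastI)

lemma osucc_least: "(\<gamma>::'o::wellorder) < \<beta> \<Longrightarrow> osucc \<gamma> \<le> \<beta>"
  unfolding osucc_def by (rule Least_le)

lemma less_osucc_iff:
  assumes "(\<gamma>::'o::wellorder) < \<beta>"
  shows "\<delta> < osucc \<gamma> \<longleftrightarrow> \<delta> \<le> \<gamma>"
  using osucc_greater[OF assms] osucc_least[of \<gamma> \<delta>] by (meson le_less_trans not_le)

lemma not_olimit_osucc:
  assumes "\<not> olimit (\<beta>::'o::wellorder)"
  obtains \<gamma> where "\<gamma> < \<beta>" and "\<beta> = osucc \<gamma>"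
proof -
  obtain \<gamma> where "\<gamma> < \<beta>" and no_between: "\<not> (\<exists>\<delta>. \<gamma> < \<delta> \<and> \<delta> < \<beta>)"
    using assms unfolding olimit_def by auto
  then have "\<beta> = osucc \<gamma>"
    using osucc_greater osucc_least by (metis le_less)
  with \<open>\<gamma> < \<beta>\<close> show thesis by (rule that)
qed

lemma osucc_limit_induct [consumes 1, case_names limit succ]:
  fixes \<sigma> \<beta> :: "'o::wellorder"
  assumes "\<beta> \<le> \<sigma>"
    and limit: "\<And>\<beta>. \<beta> \<le> \<sigma> \<Longrightarrow> olimit \<beta> \<Longrightarrow> (\<And>\<gamma>. \<gamma> < \<beta> \<Longrightarrow> P \<gamma>) \<Longrightarrow> P \<beta>"
    and succ: "\<And>\<gamma>. \<gamma> < \<sigma> \<Longrightarrow> P \<gamma> \<Longrightarrow> P (osucc \<gamma>)"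
  shows "P \<beta>"
  using assms(1)
proof (induction \<beta> rule: less_induct)
  case (less \<beta>)
  show ?case
  proof (cases "olimit \<beta>")
    case True
    then show ?thesis using limit less by simp
  next
    case False
    then obtain \<gamma> where "\<gamma> < \<beta>" "\<beta> = osucc \<gamma>" by (rule not_olimit_osucc)
    then show ?thesis using succ less by simp
  qed
qed

lemma ell_mono: "S \<subseteq> T \<Longrightarrow> ell A S \<le> ell A T"
  unfolding ell_def by (rule Sup_subset_mono) auto

lemma ell_below_osucc:
  assumes "(\<gamma>::'o::wellorder) < \<beta>"
  shows "ell A {\<delta>\<in>S. \<delta> < osucc \<gamma>}
       = (if \<gamma> \<in> S then sup (ell A {\<delta>\<in>S. \<delta> < \<gamma>}) (A \<gamma>) else ell A {\<delta>\<in>S. \<delta> < \<gamma>})"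
proof -
  have "{\<delta>\<in>S. \<delta> < osucc \<gamma>} = {\<delta>\<in>S. \<delta> < \<gamma>} \<union> (S \<inter> {\<gamma>})"
    using less_osucc_iff[OF assms] by (auto simp: le_less)
  then show ?thesis unfolding ell_def by (simp add: sup_commute)
qed

lemma ell_below_limit:
  assumes "olimit (\<beta>::'o::wellorder)" and "\<alpha> < \<beta>"
  shows "ell A {\<delta>\<in>S. \<delta> < \<beta>} = (SUP \<gamma>\<in>{\<alpha>..<\<beta>}. ell A {\<delta>\<in>S. \<delta> < \<gamma>})"
proof (rule antisym)
  show "ell A {\<delta>\<in>S. \<delta> < \<beta>} \<le> (SUP \<gamma>\<in>{\<alpha>..<\<beta>}. ell A {\<delta>\<in>S. \<delta> < \<gamma>})"
    unfolding ell_def[of A "{\<delta>\<in>S. \<delta> < \<beta>}"]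
  proof (rule SUP_least)
    fix \<delta> assume \<delta>: "\<delta> \<in> {\<delta>\<in>S. \<delta> < \<beta>}"
    then obtain \<delta>' where "\<delta> < \<delta>'" "\<delta>' < \<beta>" using assms(1) unfolding olimit_def by blast
    then have "max \<alpha> \<delta>' \<in> {\<alpha>..<\<beta>}" and "\<delta> \<in> {\<delta>\<in>S. \<delta> < max \<alpha> \<delta>'}"
      using \<delta> assms(2) by (auto simp: less_max_iff_disj)
    then show "A \<delta> \<le> (SUP \<gamma>\<in>{\<alpha>..<\<beta>}. ell A {\<delta>\<in>S. \<delta> < \<gamma>})"
      unfolding ell_def by (meson SUP_upper SUP_upper2)
  qed
next
  show "(SUP \<gamma>\<in>{\<alpha>..<\<beta>}. ell A {\<delta>\<in>S. \<delta> < \<gamma>}) \<le> ell A {\<delta>\<in>S. \<delta> < \<beta>}"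
    by (rule SUP_least, rule ell_mono) auto
qed

lemma closed_Union:
  assumes "\<And>i. i \<in> I \<Longrightarrow> closed_set \<sigma> X A (S i)"
  shows "closed_set \<sigma> X A (\<Union>i\<in>I. S i)"
  unfolding closed_set_def
proof (intro conjI ballI)
  show "(\<Union>i\<in>I. S i) \<subseteq> {\<alpha>. \<alpha> < \<sigma>}" using assms unfolding closed_set_def by blast
next
  fix \<alpha> assume "\<alpha> \<in> (\<Union>i\<in>I. S i)"
  then obtain j where j: "j \<in> I" "\<alpha> \<in> S j" by blast
  have "inf (X \<alpha>) (A \<alpha>) \<le> ell A {\<gamma>\<in>S j. \<gamma> < \<alpha>}"
    using assms[OF j(1)] j(2) unfolding closed_set_def by blast
  also have "\<dots> \<le> ell A {\<gamma>\<in>(\<Union>i\<in>I. S i). \<gamma> < \<alpha>}" using j(1) by (intro ell_mono) auto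
  finally show "inf (X \<alpha>) (A \<alpha>) \<le> ell A {\<gamma>\<in>(\<Union>i\<in>I. S i). \<gamma> < \<alpha>}" .
qed

locale filtration =
  fixes \<sigma> :: "'o::wellorder" and X A :: "'o \<Rightarrow> 'a::complete_lattice"
  assumes modular: "modular_lattice TYPE('a)"
    and upcont: "upper_continuous TYPE('a)"
    and chain: "\<And>\<alpha> \<beta>. \<alpha> \<le> \<beta> \<Longrightarrow> \<beta> \<le> \<sigma> \<Longrightarrow> X \<alpha> \<le> X \<beta>"
    and Xlim: "\<And>\<mu>. \<mu> \<le> \<sigma> \<Longrightarrow> olimit \<mu> \<Longrightarrow> X \<mu> = Sup (X ` {\<alpha>. \<alpha> < \<mu>})"
    and Xsucc: "\<And>\<alpha>. \<alpha> < \<sigma> \<Longrightarrow> X (osucc \<alpha>) = sup (X \<alpha>) (A \<alpha>)"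
begin

lemma A_le_X:
  assumes "\<delta> < \<beta>" and "\<beta> \<le> \<sigma>"
  shows "A \<delta> \<le> X \<beta>"
proof -
  have "A \<delta> \<le> X (osucc \<delta>)" using Xsucc assms by fastforce
  also have "\<dots> \<le> X \<beta>" using chain osucc_least assms by blast
  finally show ?thesis .
qed

lemma ell_le_X: "S \<subseteq> {..<\<beta>} \<Longrightarrow> \<beta> \<le> \<sigma> \<Longrightarrow> ell A S \<le> X \<beta>"
  unfolding ell_def by (auto intro!: SUP_least A_le_X)

lemma X_eq_ell:
  assumes "\<beta> \<le> \<sigma>"
  shows "X \<beta> = ell A {\<delta>. \<delta> < \<beta>}"
  using assms
proof (induction \<beta> rule: osucc_limit_induct)
  case (limit \<beta>)
  show ?case
  proof (rule antisym)
    have "X \<gamma> \<le> ell A {\<delta>. \<delta> < \<beta>}" if "\<gamma> < \<beta>" for \<gamma>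
      using limit.IH[OF that] that by (auto intro: ell_mono)
    then show "X \<beta> \<le> ell A {\<delta>. \<delta> < \<beta>}"
      using Xlim[OF limit.hyps] by (auto intro: SUP_least)
  next
    show "ell A {\<delta>. \<delta> < \<beta>} \<le> X \<beta>" using limit.hyps(1) by (intro ell_le_X) auto
  qed
next
  case (succ \<gamma>)
  then show ?case
    using Xsucc[OF succ.hyps] ell_below_osucc[OF succ.hyps, of A UNIV] by simp
qed

lemma closed_step:
  assumes closed: "closed_set \<sigma> X A S" and "\<gamma> < \<sigma>"
  shows "inf (X \<gamma>) (ell A {\<delta>\<in>S. \<delta> < osucc \<gamma>}) \<le> ell A {\<delta>\<in>S. \<delta> < \<gamma>}"
proof (cases "\<gamma> \<in> S")
  case False
  then show ?thesis by (simp add: ell_below_osucc[OF \<open>\<gamma> < \<sigma>\<close>])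
next
  case True
  define L where "L = ell A {\<delta>\<in>S. \<delta> < \<gamma>}"
  have "L \<le> X \<gamma>" unfolding L_def using \<open>\<gamma> < \<sigma>\<close> by (intro ell_le_X) auto
  then have "inf (X \<gamma>) (sup L (A \<gamma>)) = sup L (inf (X \<gamma>) (A \<gamma>))"
    using modular_lawD[OF modular, of L "X \<gamma>" "A \<gamma>"] by (simp add: inf_commute)
  also have "\<dots> \<le> L" using closed True unfolding closed_set_def L_def by simp
  finally show ?thesis using True unfolding L_def by (simp add: ell_below_osucc[OF \<open>\<gamma> < \<sigma>\<close>])
qed

lemma closed_restrict:
  assumes closed: "closed_set \<sigma> X A S" and "\<beta> \<le> \<sigma>"
  shows "\<alpha> \<le> \<beta> \<Longrightarrow> inf (X \<alpha>) (ell A {\<delta>\<in>S. \<delta> < \<beta>}) \<le> ell A {\<delta>\<in>S. \<delta> < \<alpha>}"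
  using assms(2)
proof (induction \<beta> rule: osucc_limit_induct)
  case (limit \<beta>)
  show ?case
  proof (cases "\<alpha> = \<beta>")
    case False
    with limit.prems have "\<alpha> < \<beta>" by simp
    have "mono_on {\<alpha>..<\<beta>} (\<lambda>\<gamma>. ell A {\<delta>\<in>S. \<delta> < \<gamma>})"
      by (rule mono_onI, rule ell_mono) auto
    then have "inf (X \<alpha>) (ell A {\<delta>\<in>S. \<delta> < \<beta>})
             = (SUP \<gamma>\<in>{\<alpha>..<\<beta>}. inf (X \<alpha>) (ell A {\<delta>\<in>S. \<delta> < \<gamma>}))"
      by (simp add: ell_below_limit[OF limit.hyps(2) \<open>\<alpha> < \<beta>\<close>] inf_SUP_chain[OF upcont])
    also have "\<dots> \<le> ell A {\<delta>\<in>S. \<delta> < \<alpha>}"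
      using limit.IH by (auto intro: SUP_least)
    finally show ?thesis .
  qed simp
next
  case (succ \<gamma>)
  show ?case
  proof (cases "\<alpha> = osucc \<gamma>")
    case False
    with succ.prems have "\<alpha> \<le> \<gamma>"
      using less_osucc_iff[OF succ.hyps(1), of \<alpha>] by (simp add: le_less)
    then have "X \<alpha> \<le> X \<gamma>" using chain succ.hyps(1) by simp
    then have "inf (X \<alpha>) (ell A {\<delta>\<in>S. \<delta> < osucc \<gamma>})
             = inf (X \<alpha>) (inf (X \<gamma>) (ell A {\<delta>\<in>S. \<delta> < osucc \<gamma>}))"
      by (simp add: inf_assoc[symmetric] inf.absorb1)
    also have "\<dots> \<le> inf (X \<alpha>) (ell A {\<delta>\<in>S. \<delta> < \<gamma>})"
      using closed_step[OF closed succ.hyps(1)] inf_mono by blast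
    also have "\<dots> \<le> ell A {\<delta>\<in>S. \<delta> < \<alpha>}" using succ.IH \<open>\<alpha> \<le> \<gamma>\<close> by simp
    finally show ?thesis .
  qed simp
qed


lemma INF_ell_below_le_X:
  assumes "I \<noteq> {}" and "\<beta> \<le> \<sigma>"
  shows "(INF i\<in>I. ell A {\<delta>\<in>S i. \<delta> < \<beta>}) \<le> X \<beta>"
proof -
  obtain j where "j \<in> I" using assms(1) by blast
  then have "(INF i\<in>I. ell A {\<delta>\<in>S i. \<delta> < \<beta>}) \<le> ell A {\<delta>\<in>S j. \<delta> < \<beta>}" by (rule INF_lower)
  also have "\<dots> \<le> X \<beta>" using assms(2) by (intro ell_le_X) auto
  finally show ?thesis .
qed

lemma inf_X_INF_le:
  assumes closed: "\<And>i. i \<in> I \<Longrightarrow> closed_set \<sigma> X A (S i)" and "\<alpha> \<le> \<beta>" and "\<beta> \<le> \<sigma>"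
  shows "inf (X \<alpha>) (INF i\<in>I. ell A {\<delta>\<in>S i. \<delta> < \<beta>}) \<le> (INF i\<in>I. ell A {\<delta>\<in>S i. \<delta> < \<alpha>})"
proof (rule INF_greatest)
  fix i assume "i \<in> I"
  then have "inf (X \<alpha>) (INF i\<in>I. ell A {\<delta>\<in>S i. \<delta> < \<beta>}) \<le> inf (X \<alpha>) (ell A {\<delta>\<in>S i. \<delta> < \<beta>})"
    by (intro inf_mono INF_lower) simp_all
  also have "\<dots> \<le> ell A {\<delta>\<in>S i. \<delta> < \<alpha>}"
    using closed_restrict[OF closed[OF \<open>i \<in> I\<close>] assms(3,2)] .
  finally show "inf (X \<alpha>) (INF i\<in>I. ell A {\<delta>\<in>S i. \<delta> < \<beta>}) \<le> ell A {\<delta>\<in>S i. \<delta> < \<alpha>}" .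
qed

lemma INF_ell_below_le:
  assumes "I \<noteq> {}" and closed: "\<And>i. i \<in> I \<Longrightarrow> closed_set \<sigma> X A (S i)" and "\<beta> \<le> \<sigma>"
  shows "(INF i\<in>I. ell A {\<delta>\<in>S i. \<delta> < \<beta>}) \<le> ell A {\<delta>\<in>(\<Inter>i\<in>I. S i). \<delta> < \<beta>}"
  using assms(3)
proof (induction \<beta> rule: osucc_limit_induct)
  case (limit \<beta>)
  define M where "M = (INF i\<in>I. ell A {\<delta>\<in>S i. \<delta> < \<beta>})"
  have "mono_on {\<alpha>. \<alpha> < \<beta>} X" using chain limit.hyps(1) by (intro mono_onI) auto
  moreover have "M \<le> X \<beta>" unfolding M_def using assms(1) limit.hyps(1) by (rule INF_ell_below_le_X)
  ultimately have "M = (SUP \<gamma>\<in>{\<alpha>. \<alpha> < \<beta>}. inf M (X \<gamma>))"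
    using Xlim[OF limit.hyps] inf_SUP_chain[OF upcont] by (metis inf.absorb1)
  also have "\<dots> \<le> ell A {\<delta>\<in>(\<Inter>i\<in>I. S i). \<delta> < \<beta>}"
  proof (rule SUP_least)
    fix \<gamma> assume \<gamma>: "\<gamma> \<in> {\<alpha>. \<alpha> < \<beta>}"
    then have "\<gamma> \<le> \<beta>" by simp
    then have "inf M (X \<gamma>) \<le> (INF i\<in>I. ell A {\<delta>\<in>S i. \<delta> < \<gamma>})"
      using inf_X_INF_le[of I S, OF closed _ limit.hyps(1)] unfolding M_def by (simp add: inf_commute)
    also have "\<dots> \<le> ell A {\<delta>\<in>(\<Inter>i\<in>I. S i). \<delta> < \<gamma>}" using limit.IH \<gamma> by simp
    also have "\<dots> \<le> ell A {\<delta>\<in>(\<Inter>i\<in>I. S i). \<delta> < \<beta>}" using \<gamma> by (intro ell_mono) auto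
    finally show "inf M (X \<gamma>) \<le> ell A {\<delta>\<in>(\<Inter>i\<in>I. S i). \<delta> < \<beta>}" .
  qed
  finally show ?case unfolding M_def .
next
  case (succ \<gamma>)
  define M where "M = (INF i\<in>I. ell A {\<delta>\<in>S i. \<delta> < osucc \<gamma>})"
  define T where "T = (\<Inter>i\<in>I. S i)"
  have succ_le: "osucc \<gamma> \<le> \<sigma>" and le_succ: "\<gamma> \<le> osucc \<gamma>"
    using osucc_least osucc_greater succ.hyps by (blast intro: less_imp_le)+
  have cut: "inf (X \<gamma>) M \<le> ell A {\<delta>\<in>T. \<delta> < \<gamma>}"
    using order_trans[OF inf_X_INF_le[of I S, OF closed le_succ succ_le] succ.IH]
    unfolding M_def T_def .
  show ?case
  proof (cases "\<gamma> \<in> T")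
    case True
    have "A \<gamma> \<le> M" unfolding M_def
    proof (rule INF_greatest)
      fix i assume "i \<in> I"
      then show "A \<gamma> \<le> ell A {\<delta>\<in>S i. \<delta> < osucc \<gamma>}"
        using True succ.hyps by (simp add: T_def ell_below_osucc)
    qed
    moreover have "M \<le> sup (X \<gamma>) (A \<gamma>)"
      using INF_ell_below_le_X[OF assms(1) succ_le] Xsucc[OF succ.hyps(1)] unfolding M_def by simp
    ultimately have "M = sup (A \<gamma>) (inf (X \<gamma>) M)" by (rule modular_split[OF modular])
    also have "\<dots> \<le> sup (A \<gamma>) (ell A {\<delta>\<in>T. \<delta> < \<gamma>})" using cut by (rule sup_mono[OF order.refl])
    also have "\<dots> = ell A {\<delta>\<in>T. \<delta> < osucc \<gamma>}"
      using True by (simp add: ell_below_osucc[OF succ.hyps(1)] sup_commute)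
    finally show ?thesis unfolding M_def T_def .
  next
    case False
    then obtain j where j: "j \<in> I" "\<gamma> \<notin> S j" unfolding T_def by blast
    have "M \<le> ell A {\<delta>\<in>S j. \<delta> < osucc \<gamma>}" unfolding M_def using j(1) by (rule INF_lower)
    also have "\<dots> = ell A {\<delta>\<in>S j. \<delta> < \<gamma>}" using j(2) by (simp add: ell_below_osucc[OF succ.hyps(1)])
    also have "\<dots> \<le> X \<gamma>" using succ.hyps by (intro ell_le_X) auto
    finally have "M = inf (X \<gamma>) M" by (simp add: inf.absorb2)
    also have "\<dots> \<le> ell A {\<delta>\<in>T. \<delta> < \<gamma>}" by (rule cut)
    also have "\<dots> \<le> ell A {\<delta>\<in>T. \<delta> < osucc \<gamma>}" using le_succ by (intro ell_mono) auto
    finally show ?thesis unfolding M_def T_def .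
  qed
qed

lemma closed_Inter:
  assumes "I \<noteq> {}" and closed: "\<And>i. i \<in> I \<Longrightarrow> closed_set \<sigma> X A (S i)"
  shows "closed_set \<sigma> X A (\<Inter>i\<in>I. S i)"
  unfolding closed_set_def
proof (intro conjI ballI)
  show "(\<Inter>i\<in>I. S i) \<subseteq> {\<alpha>. \<alpha> < \<sigma>}" using assms unfolding closed_set_def by blast
next
  fix \<alpha> assume \<alpha>: "\<alpha> \<in> (\<Inter>i\<in>I. S i)"
  then have "\<alpha> \<le> \<sigma>" using assms unfolding closed_set_def by fastforce
  have "inf (X \<alpha>) (A \<alpha>) \<le> (INF i\<in>I. ell A {\<delta>\<in>S i. \<delta> < \<alpha>})"
    using closed \<alpha> unfolding closed_set_def by (blast intro: INF_greatest)
  also have "\<dots> \<le> ell A {\<delta>\<in>(\<Inter>i\<in>I. S i). \<delta> < \<alpha>}"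
    using INF_ell_below_le[OF assms \<open>\<alpha> \<le> \<sigma>\<close>] .
  finally show "inf (X \<alpha>) (A \<alpha>) \<le> ell A {\<delta>\<in>(\<Inter>i\<in>I. S i). \<delta> < \<alpha>}" .
qed

lemma ell_Inter:
  assumes "I \<noteq> {}" and closed: "\<And>i. i \<in> I \<Longrightarrow> closed_set \<sigma> X A (S i)"
  shows "ell A (\<Inter>i\<in>I. S i) = (INF i\<in>I. ell A (S i))"
proof (rule antisym)
  show "ell A (\<Inter>i\<in>I. S i) \<le> (INF i\<in>I. ell A (S i))"
    by (rule INF_greatest, rule ell_mono) auto
next
  have below_\<sigma>: "{\<delta>\<in>S i. \<delta> < \<sigma>} = S i" if "i \<in> I" for i
    using closed[OF that] unfolding closed_set_def by blast
  have "(INF i\<in>I. ell A {\<delta>\<in>S i. \<delta> < \<sigma>}) \<le> ell A {\<delta>\<in>(\<Inter>i\<in>I. S i). \<delta> < \<sigma>}"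
    using INF_ell_below_le[OF assms order.refl] .
  moreover have "{\<delta>\<in>(\<Inter>i\<in>I. S i). \<delta> < \<sigma>} = (\<Inter>i\<in>I. S i)" using assms(1) below_\<sigma> by blast
  ultimately show "(INF i\<in>I. ell A (S i)) \<le> ell A (\<Inter>i\<in>I. S i)" using below_\<sigma> by simp
qed

text \<open>The whole of \<open>\<sigma>\<close> is closed, and its \<open>\<ell>\<close> is \<open>X \<sigma>\<close>; this covers the empty family.\<close>
lemma closed_initial_segment: "closed_set \<sigma> X A {\<alpha>. \<alpha> < \<sigma>}"
  unfolding closed_set_def
proof (intro conjI ballI)
  fix \<alpha> assume "\<alpha> \<in> {\<alpha>. \<alpha> < \<sigma>}"
  then have "{\<gamma>\<in>{\<alpha>. \<alpha> < \<sigma>}. \<gamma> < \<alpha>} = {\<gamma>. \<gamma> < \<alpha>}" and "\<alpha> \<le> \<sigma>" by auto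
  then have "X \<alpha> = ell A {\<gamma>\<in>{\<alpha>. \<alpha> < \<sigma>}. \<gamma> < \<alpha>}" using X_eq_ell by simp
  then show "inf (X \<alpha>) (A \<alpha>) \<le> ell A {\<gamma>\<in>{\<alpha>. \<alpha> < \<sigma>}. \<gamma> < \<alpha>}" by (simp add: le_infI1)
qed simp

lemma ell_initial_segment: "ell A {\<alpha>. \<alpha> < \<sigma>} = X \<sigma>"
  using X_eq_ell[of \<sigma>] by simp

end


theorem lemma2p5:
  fixes \<sigma> :: "'o::wellorder"
    and X A :: "'o \<Rightarrow> 'a::complete_lattice"
    and S :: "'i \<Rightarrow> 'o set" and I :: "'i set"
  assumes modular: "modular_lattice TYPE('a)"
    and upcont: "upper_continuous TYPE('a)"
    and chain: "\<And>\<alpha> \<beta>. \<alpha> \<le> \<beta> \<Longrightarrow> \<beta> \<le> \<sigma> \<Longrightarrow> X \<alpha> \<le> X \<beta>"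
    and X0: "\<And>\<alpha>. (\<forall>\<beta>. \<alpha> \<le> \<beta>) \<Longrightarrow> X \<alpha> = bot"
    and Xsigma: "X \<sigma> = top"
    and Xlim: "\<And>\<mu>. \<mu> \<le> \<sigma> \<Longrightarrow> olimit \<mu> \<Longrightarrow> X \<mu> = Sup (X ` {\<alpha>. \<alpha> < \<mu>})"
    and Xsucc: "\<And>\<alpha>. \<alpha> < \<sigma> \<Longrightarrow> X (osucc \<alpha>) = sup (X \<alpha>) (A \<alpha>)"
    and Sclosed: "\<And>i. i \<in> I \<Longrightarrow> closed_set \<sigma> X A (S i)"
  shows "closed_set \<sigma> X A (\<Union>i\<in>I. S i)
       \<and> closed_set \<sigma> X A ({\<alpha>. \<alpha> < \<sigma>} \<inter> (\<Inter>i\<in>I. S i))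
       \<and> ell A (\<Union>i\<in>I. S i) = Sup ((\<lambda>i. ell A (S i)) ` I)
       \<and> ell A ({\<alpha>. \<alpha> < \<sigma>} \<inter> (\<Inter>i\<in>I. S i)) = Inf ((\<lambda>i. ell A (S i)) ` I)"
proof -
  interpret filtration \<sigma> X A using modular upcont chain Xlim Xsucc by unfold_locales
  have union_closed: "closed_set \<sigma> X A (\<Union>i\<in>I. S i)" using Sclosed by (rule closed_Union)
  have union_ell: "ell A (\<Union>i\<in>I. S i) = Sup ((\<lambda>i. ell A (S i)) ` I)"
    unfolding ell_def by (rule SUP_UNION)
  have "closed_set \<sigma> X A ({\<alpha>. \<alpha> < \<sigma>} \<inter> (\<Inter>i\<in>I. S i))
      \<and> ell A ({\<alpha>. \<alpha> < \<sigma>} \<inter> (\<Inter>i\<in>I. S i)) = Inf ((\<lambda>i. ell A (S i)) ` I)"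
  proof (cases "I = {}")
    case True
    then show ?thesis using closed_initial_segment ell_initial_segment Xsigma by simp
  next
    case False
    have "{\<alpha>. \<alpha> < \<sigma>} \<inter> (\<Inter>i\<in>I. S i) = (\<Inter>i\<in>I. S i)"
      using False Sclosed unfolding closed_set_def by blast
    then show ?thesis using closed_Inter[OF False Sclosed] ell_Inter[OF False Sclosed] by simp
  qed
  with union_closed union_ell show ?thesis by blast
qed

end
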